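(* Let $k\ge d$ and let $(\mathbf a_1,\mathbf b_1),\dots,(\mathbf a_k,\mathbf b_k)$ be i.i.d. copies of a pair of random vectors $(\mathbf a,\mathbf b)$ in $\mathbb R^d\times\mathbb R^d$ such that $\mathbb E[\mathbf a\mathbf b^\top]$ exists (all entries $\mathbb E[a_ib_j]$ finite). Let $\mathbf A,\mathbf B\in\mathbb R^{k\times d}$ have $i$-th rows $\mathbf a_i^\top$ and $\mathbf b_i^\top$. Then $\mathbb E[\det(\mathbf A^\top\mathbf B)]=d!\binom{k}{d}\det(\mathbb E[\mathbf a\mathbf b^\top])$. *)

theory Defs
  imports "HOL-Probability.Probability"
begin

definition gram_AtB :: "nat \<Rightarrow> (nat \<Rightarrow> real^'d) \<Rightarrow> (nat \<Rightarrow> real^'d) \<Rightarrow> real^'d^'d" where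
  "gram_AtB k a b = (\<chi> i j. \<Sum>l<k. a l $ i * b l $ j)"

end

theory Submission
  imports Defs
begin

text \<open>Expanding the determinant of \<open>A\<^sup>T B = \<Sum>\<^sub>l a\<^sub>l b\<^sub>l\<^sup>T\<close> multilinearly over its rows leaves one
  term for each injective choice \<open>f\<close> of sample indices for the \<open>d\<close> rows: if two rows use the same
  sample, the term is a multiple of a determinant with two equal rows. For injective \<open>f\<close> the
  factors of a term come from distinct, hence independent, copies of \<open>(a, b)\<close>, so its
  expectation is the corresponding term of \<open>det (E[a b\<^sup>T])\<close>. There are \<open>d! (k choose d)\<close> injective
  maps \<open>f\<close>.\<close>

lemma
  fixes g :: "'b \<Rightarrow> 'c::{banach, second_countable_topology}"
  assumes X: "X \<in> measurable M N" and Y: "Y \<in> measurable M N"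
    and same_distr: "distr M N X = distr M N Y" and g: "g \<in> borel_measurable N"
  shows integrable_eq_if_distr_eq: "integrable M (\<lambda>w. g (X w)) \<longleftrightarrow> integrable M (\<lambda>w. g (Y w))"
    and integral_eq_if_distr_eq: "(\<integral>w. g (X w) \<partial>M) = (\<integral>w. g (Y w) \<partial>M)"
proof -
  have "integrable M (\<lambda>w. g (X w)) \<longleftrightarrow> integrable (distr M N X) g"
    using X g by (simp add: integrable_distr_eq)
  also have "\<dots> \<longleftrightarrow> integrable M (\<lambda>w. g (Y w))"
    using same_distr Y g by (simp add: integrable_distr_eq)
  finally show "integrable M (\<lambda>w. g (X w)) \<longleftrightarrow> integrable M (\<lambda>w. g (Y w))" .
  have "(\<integral>w. g (X w) \<partial>M) = integral\<^sup>L (distr M N X) g"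
    using X g by (simp add: integral_distr)
  also have "\<dots> = (\<integral>w. g (Y w) \<partial>M)"
    using same_distr Y g by (simp add: integral_distr)
  finally show "(\<integral>w. g (X w) \<partial>M) = (\<integral>w. g (Y w) \<partial>M)" .
qed

lemma (in prob_space) integral_prod_indep_copies:
  fixes X :: "'i \<Rightarrow> 'a \<Rightarrow> 'b" and \<phi> :: "'j \<Rightarrow> 'b \<Rightarrow> real" and f :: "'j \<Rightarrow> 'i"
  assumes "finite J" "inj_on f J" "f ` J \<subseteq> I"
    and indep: "indep_vars (\<lambda>_. N) X I"
    and distr_eq: "\<And>i. i \<in> I \<Longrightarrow> distr M N (X i) = distr M N Z"
    and "Z \<in> measurable M N"
    and \<phi>_meas: "\<And>j. j \<in> J \<Longrightarrow> \<phi> j \<in> borel_measurable N"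
    and \<phi>_int: "\<And>j. j \<in> J \<Longrightarrow> integrable M (\<lambda>w. \<phi> j (Z w))"
  shows "integrable M (\<lambda>w. \<Prod>j\<in>J. \<phi> j (X (f j) w))"
    and "(\<integral>w. (\<Prod>j\<in>J. \<phi> j (X (f j) w)) \<partial>M) = (\<Prod>j\<in>J. \<integral>w. \<phi> j (Z w) \<partial>M)"
proof -
  \<comment> \<open>Index the factors by the sample \<open>f j\<close> they use, so that independence over \<open>f ` J\<close> applies.\<close>
  define \<psi> where "\<psi> i = \<phi> (the_inv_into J f i)" for i
  have \<psi>_f: "\<psi> (f j) = \<phi> j" if "j \<in> J" for j
    using that \<open>inj_on f J\<close> by (simp add: \<psi>_def the_inv_into_f_f)
  have prod_X: "(\<Prod>j\<in>J. \<phi> j (X (f j) w)) = (\<Prod>i\<in>f ` J. \<psi> i (X i w))" for w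
    using \<open>inj_on f J\<close> by (simp add: prod.reindex \<psi>_f)
  have prod_Z: "(\<Prod>j\<in>J. \<integral>w. \<phi> j (Z w) \<partial>M) = (\<Prod>i\<in>f ` J. \<integral>w. \<psi> i (Z w) \<partial>M)"
    using \<open>inj_on f J\<close> by (simp add: prod.reindex \<psi>_f)
  have X_meas: "X i \<in> measurable M N" if "i \<in> I" for i
    using indep that by (simp add: indep_vars_def)
  have indep_\<psi>: "indep_vars (\<lambda>_. borel) (\<lambda>i w. \<psi> i (X i w)) (f ` J)"
    using \<phi>_meas \<open>inj_on f J\<close>
    by (intro indep_vars_compose2[OF indep_vars_subset[OF indep \<open>f ` J \<subseteq> I\<close>]])
       (auto simp: \<psi>_def the_inv_into_f_f)
  have integrable_\<psi>: "integrable M (\<lambda>w. \<psi> i (X i w))"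
    and integral_\<psi>: "(\<integral>w. \<psi> i (X i w) \<partial>M) = (\<integral>w. \<psi> i (Z w) \<partial>M)" if "i \<in> f ` J" for i
  proof -
    from that obtain j where "j \<in> J" "i = f j" by blast
    then have "i \<in> I" and \<psi>_meas: "\<psi> i \<in> borel_measurable N"
      using \<open>f ` J \<subseteq> I\<close> \<phi>_meas \<psi>_f by auto
    show "integrable M (\<lambda>w. \<psi> i (X i w))"
      using integrable_eq_if_distr_eq[OF X_meas[OF \<open>i \<in> I\<close>] \<open>Z \<in> measurable M N\<close> distr_eq \<psi>_meas]
        \<phi>_int \<psi>_f \<open>j \<in> J\<close> \<open>i = f j\<close> \<open>i \<in> I\<close> by simp
    show "(\<integral>w. \<psi> i (X i w) \<partial>M) = (\<integral>w. \<psi> i (Z w) \<partial>M)"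
      using integral_eq_if_distr_eq[OF X_meas[OF \<open>i \<in> I\<close>] \<open>Z \<in> measurable M N\<close> distr_eq \<psi>_meas]
        \<open>i \<in> I\<close> by simp
  qed
  have "integrable M (\<lambda>w. \<Prod>i\<in>f ` J. \<psi> i (X i w))"
    using \<open>finite J\<close> indep_\<psi> integrable_\<psi> by (intro indep_vars_integrable) auto
  then show "integrable M (\<lambda>w. \<Prod>j\<in>J. \<phi> j (X (f j) w))"
    by (simp add: prod_X)
  have "(\<integral>w. (\<Prod>i\<in>f ` J. \<psi> i (X i w)) \<partial>M) = (\<Prod>i\<in>f ` J. \<integral>w. \<psi> i (Z w) \<partial>M)"
    using \<open>finite J\<close> indep_\<psi> integrable_\<psi> integral_\<psi> by (simp add: indep_vars_lebesgue_integral)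
  then show "(\<integral>w. (\<Prod>j\<in>J. \<phi> j (X (f j) w)) \<partial>M) = (\<Prod>j\<in>J. \<integral>w. \<phi> j (Z w) \<partial>M)"
    by (simp add: prod_X prod_Z)
qed

lemma det_gram_AtB_eq_sum_inj:
  fixes a b :: "nat \<Rightarrow> real^'d"
  shows "det (gram_AtB k a b) = (\<Sum>f | f \<in> (UNIV :: 'd set) \<rightarrow>\<^sub>E {..<k} \<and> inj f. \<Sum>p | p permutes UNIV.
      of_int (sign p) * (\<Prod>i\<in>UNIV. a (f i) $ i * b (f i) $ p i))"
proof -
  define T where "T f = (\<Sum>p | p permutes UNIV. of_int (sign p) * (\<Prod>i\<in>UNIV. a (f i) $ i * b (f i) $ p i))"
    for f :: "'d \<Rightarrow> nat"
  have T_eq_0: "T f = 0" if "\<not> inj f" for f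
  proof -
    from that obtain i j where "i \<noteq> j" "f i = f j" by (auto simp: inj_def)
    have "T f = (\<Prod>i\<in>UNIV. a (f i) $ i) * det (\<chi> i j. b (f i) $ j)"
      by (simp add: T_def det_def sum_distrib_left prod.distrib algebra_simps)
    also have "det (\<chi> i j. b (f i) $ j) = 0"
      by (rule det_identical_rows[OF \<open>i \<noteq> j\<close>]) (simp add: row_def \<open>f i = f j\<close>)
    finally show ?thesis by simp
  qed
  have "det (gram_AtB k a b)
      = (\<Sum>p | p permutes UNIV. of_int (sign p) * (\<Prod>i\<in>UNIV. \<Sum>l<k. a l $ i * b l $ p i))"
    by (simp add: det_def gram_AtB_def)
  also have "\<dots> = (\<Sum>f \<in> UNIV \<rightarrow>\<^sub>E {..<k}. T f)"
    unfolding T_def by (simp add: prod_sum_PiE sum_distrib_left sum.swap[where A = "{p. p permutes UNIV}"])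
  also have "\<dots> = (\<Sum>f | f \<in> UNIV \<rightarrow>\<^sub>E {..<k} \<and> inj f. T f)"
    by (rule sum.mono_neutral_right) (auto simp: finite_PiE T_eq_0)
  finally show ?thesis unfolding T_def by (simp add: Collect_conj_eq)
qed

lemma card_inj_PiE_lessThan:
  assumes "finite A" "card A \<le> k"
  shows "card {f \<in> A \<rightarrow>\<^sub>E {..<k}. inj_on f A} = fact (card A) * (k choose card A)"
proof -
  have "real (card {f \<in> A \<rightarrow>\<^sub>E {..<k}. inj_on f A}) = (\<Prod>i = 0..<card A. real k - real i)"
    using assms card_inj_on_subset_funcset[of A "{..<k}" A] by (simp add: of_nat_diff)
  also have "\<dots> = fact (card A) * real (k choose card A)"
    by (simp add: binomial_gbinomial gbinomial_prod_rev)
  finally show ?thesis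
    by (metis of_nat_eq_iff of_nat_fact of_nat_mult)
qed

theorem lemma1:
  fixes M :: "'w measure"
    and Z :: "'w \<Rightarrow> (real^'d) \<times> (real^'d)"
    and X :: "nat \<Rightarrow> 'w \<Rightarrow> (real^'d) \<times> (real^'d)"
    and k :: nat
  assumes "prob_space M"
    and "k \<ge> CARD('d)"
    and "Z \<in> borel_measurable M"
    and "\<And>i. i < k \<Longrightarrow> X i \<in> borel_measurable M"
    and "prob_space.indep_vars M (\<lambda>_. borel) X {..<k}"
    and "\<And>i. i < k \<Longrightarrow> distr M borel (X i) = distr M borel Z"
    and "\<And>i j. integrable M (\<lambda>w. fst (Z w) $ i * snd (Z w) $ j)"
  shows "integrable M (\<lambda>w. det (gram_AtB k (\<lambda>l. fst (X l w)) (\<lambda>l. snd (X l w))))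
    \<and> (\<integral>w. det (gram_AtB k (\<lambda>l. fst (X l w)) (\<lambda>l. snd (X l w))) \<partial>M)
        = fact CARD('d) * real (k choose CARD('d))
          * det (\<chi> i j. \<integral>w. fst (Z w) $ i * snd (Z w) $ j \<partial>M)"
proof -
  interpret prob_space M by fact
  let ?F = "{f. f \<in> (UNIV :: 'd set) \<rightarrow>\<^sub>E {..<k} \<and> inj f}" and ?P = "{p. p permutes (UNIV :: 'd set)}"
  define E where "E = (\<chi> i j. \<integral>w. fst (Z w) $ i * snd (Z w) $ j \<partial>M)"
  define T where "T f p = (\<lambda>w. of_int (sign p) * (\<Prod>i\<in>UNIV. fst (X (f i) w) $ i * snd (X (f i) w) $ p i))"
    for f p
  have T_integrable: "integrable M (T f p)"
    and T_integral: "(\<integral>w. T f p w \<partial>M) = of_int (sign p) * (\<Prod>i\<in>UNIV. E $ i $ p i)" if "f \<in> ?F" for f p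
  proof -
    from that have f_inj: "inj f" and f_range: "range f \<subseteq> {..<k}" by auto
    have distr_eq: "distr M borel (X i) = distr M borel Z" if "i \<in> {..<k}" for i
      using that assms(6) by simp
    have meas: "(\<lambda>x :: (real^'d) \<times> (real^'d). fst x $ i * snd x $ p i) \<in> borel_measurable borel"
      for i by (intro borel_measurable_continuous_onI continuous_intros)
    show "integrable M (T f p)" "(\<integral>w. T f p w \<partial>M) = of_int (sign p) * (\<Prod>i\<in>UNIV. E $ i $ p i)"
      using integral_prod_indep_copies[OF finite_class.finite_UNIV f_inj f_range assms(5)
          distr_eq assms(3) meas assms(7), of "\<lambda>i. i"]
      by (simp_all add: T_def E_def)
  qed
  have "integrable M (\<lambda>w. \<Sum>f\<in>?F. \<Sum>p\<in>?P. T f p w)"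
    using T_integrable by auto
  moreover have "(\<integral>w. (\<Sum>f\<in>?F. \<Sum>p\<in>?P. T f p w) \<partial>M)
      = (\<Sum>f\<in>?F. \<Sum>p\<in>?P. of_int (sign p) * (\<Prod>i\<in>UNIV. E $ i $ p i))"
    using T_integrable T_integral by (simp add: integrable_sum)
  moreover have "\<dots> = fact CARD('d) * real (k choose CARD('d)) * det E"
    using card_inj_PiE_lessThan[of "UNIV :: 'd set" k] assms(2) by (simp add: det_def)
  ultimately show ?thesis
    by (simp add: det_gram_AtB_eq_sum_inj T_def E_def)
qed

end
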